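(* Let $\Gamma$ be a graph and let $f:\Gamma\to\Gamma$ be an irreducible, expanding graph map which is a homotopy equivalence and which is periodic on the vertex set of $\Gamma$ (i.e. $f_V:\mathcal{V}\Gamma\to\mathcal{V}\Gamma$ is a bijection). Then every fold decomposition of $f$ consists of at least $\mathfrak{S}(\Gamma)$ folds, where $\mathfrak{S}(\Gamma)$ is the stack score of $\Gamma$.
   Context: A graph $\Gamma$ is a finite 1-dimensional CW complex (multiple edges and loops allowed) with a chosen orientation on each edge; $\mathcal{V}\Gamma$ is its vertex set, $\mathcal{E}\Gamma$ its set of (positively oriented) edges, $\mathcal{E}^{\pm}\Gamma$ the set of edges with both orientations, $\bar e$ the reverse of $e$, and $\iota(e),\tau(e)$ the initial and terminal vertices. An edge path is a nonempty concatenation $u=e_1\cdots e_k$ of oriented edges with $\tau(e_i)=\iota(e_{i+1})$; $|u|=k$ counts edges without cancelling backtracks, and $u$ traverses an edge $e$ if $e$ or $\bar e$ occurs in it. A graph map $f:\Gamma_1\to\Gamma_2$ consists of a vertex map $f_V$ and an assignment of an edge path $f(e)$ in $\Gamma_2$ to each $e\in\mathcal{E}^\pm\Gamma_1$ with $\iota(f(e))=f_V(\iota(e))$ and $f(\bar e)=\overline{f(e)}$; it extends to edge paths by concatenation, powers are compositions, and $f$ is regarded as a continuous map. A graph isomorphism is a graph map with $f_V$ bijective which restricts to a bijection from $\mathcal{E}^\pm\Gamma_1$ onto the single edges $\mathcal{E}^\pm\Gamma_2$; an automorphism of $G$ is an isomorphism $G\to G$, and $\mathrm{Aut}(G)$ is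 the automorphism group. The transition matrix $T(f)$ of a self map has $(i,j)$ entry the number of times $f(e_i)$ traverses $e_j$. $f$ is irreducible if $T(f)$ is an irreducible matrix and every vertex has valence at least $3$; $f$ is expanding if $|f^n(e)|\to\infty$ as $n\to\infty$ for every edge $e$. Folds: for distinct oriented edges $e_0,e_1$ with $e_1\neq\bar e_0$ and $\iota(e_0)=\iota(e_1)$: the proper full fold of $e_1$ over $e_0$ subdivides $e_1=e_1''e_1'$ and identifies $e_1''$ with $e_0$ (map $e_1\mapsto e_0e_1'$, other edges fixed); the complete fold identifies $e_0$ and $e_1$ entirely; the partial fold subdivides $e_0=e_0'e_0''$, $e_1=e_1''e_1'$ and identifies $e_1''$ with $e_0'$ (map $e_0\mapsto e_0'e_0''$, $e_1\mapsto e_0'e_1'$). A fold decomposition of $f:\Gamma\to\Gamma$ with $m$ folds is an expression $f=h\circ f_m\circ\cdots\circ f_1$ with $\Gamma_1=\Gamma$, each $f_i:\Gamma_i\to\Gamma_{i+1}$ a fold and $h:\Gamma_{m+1}\to\Gamma$ a graph isomorphism. Stack score: a supergraph of $\Gamma$ is a graph $G$ containing $\Gamma$ as a subgraph. For a supergraph $G$ with $\mathcal{V}G=\mathcal{V}\Gamma$ and $\psi\in\mathrm{Aut}(G)$, let $\sim_\psi$ be the equivalence relation on $\mathcal{E}\Gamma$ (unoriented edges) generated by $a\sim_\psi\psi(a)$ whenever $\psi(a)$ (as an unoriented edge) lies in $\mathcal{E}\Gamma$. The stack score $\mathfrak{S}(\Gamma)$ is the minimum, over all such pairs $(G,\psi)$,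 of the number of $\sim_\psi$-equivalence classes. *)

theory Defs
  imports Main
begin

section \<open>Finite graphs (1-dimensional CW complexes, loops and multi-edges allowed)\<close>

record ('v, 'e) mgraph =
  gverts :: "'v set"
  gedges :: "'e set"
  gsrc   :: "'e \<Rightarrow> 'v"
  gtgt   :: "'e \<Rightarrow> 'v"

definition wf_graph :: "('v, 'e) mgraph \<Rightarrow> bool" where
  "wf_graph G \<longleftrightarrow> finite (gverts G) \<and> finite (gedges G) \<and>
     (\<forall>e\<in>gedges G. gsrc G e \<in> gverts G \<and> gtgt G e \<in> gverts G)"

text \<open>Oriented edges: (e, True) is e, (e, False) is its reverse.\<close>
type_synonym 'e oedge = "'e \<times> bool"

definition oedges :: "('v, 'e) mgraph \<Rightarrow> 'e oedge set" where
  "oedges G = gedges G \<times> UNIV"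

definition orev :: "'e oedge \<Rightarrow> 'e oedge" where
  "orev d = (fst d, \<not> snd d)"

definition oinit :: "('v, 'e) mgraph \<Rightarrow> 'e oedge \<Rightarrow> 'v" where
  "oinit G d = (if snd d then gsrc G (fst d) else gtgt G (fst d))"

definition oterm :: "('v, 'e) mgraph \<Rightarrow> 'e oedge \<Rightarrow> 'v" where
  "oterm G d = (if snd d then gtgt G (fst d) else gsrc G (fst d))"

definition is_path :: "('v, 'e) mgraph \<Rightarrow> 'e oedge list \<Rightarrow> 'v \<Rightarrow> 'v \<Rightarrow> bool" where
  "is_path G p u v \<longleftrightarrow> p \<noteq> [] \<and> set p \<subseteq> oedges G \<and>
     oinit G (hd p) = u \<and> oterm G (last p) = v \<and>
     (\<forall>i. Suc i < length p \<longrightarrow> oterm G (p ! i) = oinit G (p ! Suc i))"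

definition is_tpath :: "('v, 'e) mgraph \<Rightarrow> 'e oedge list \<Rightarrow> 'v \<Rightarrow> 'v \<Rightarrow> bool" where
  "is_tpath G p u v \<longleftrightarrow> (p = [] \<and> u = v \<and> u \<in> gverts G) \<or> is_path G p u v"

definition rev_path :: "'e oedge list \<Rightarrow> 'e oedge list" where
  "rev_path p = rev (map orev p)"

record ('v, 'e, 'w, 'f) gmap =
  vmap :: "'v \<Rightarrow> 'w"
  emap :: "'e \<Rightarrow> 'f oedge list"   (* image of the positively oriented edge *)

definition img :: "('v, 'e, 'w, 'f) gmap \<Rightarrow> 'e oedge \<Rightarrow> 'f oedge list" where
  "img f d = (if snd d then emap f (fst d) else rev_path (emap f (fst d)))"

definition is_gmap :: "('v, 'e) mgraph \<Rightarrow> ('w, 'f) mgraph \<Rightarrow> ('v, 'e, 'w, 'f) gmap \<Rightarrow> bool" where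
  "is_gmap G H f \<longleftrightarrow> (\<forall>v\<in>gverts G. vmap f v \<in> gverts H) \<and>
     (\<forall>e\<in>gedges G. is_path H (emap f e) (vmap f (gsrc G e)) (vmap f (gtgt G e)))"

definition gmap_eq :: "('v, 'e) mgraph \<Rightarrow> ('v, 'e, 'w, 'f) gmap \<Rightarrow> ('v, 'e, 'w, 'f) gmap \<Rightarrow> bool" where
  "gmap_eq G f g \<longleftrightarrow> (\<forall>v\<in>gverts G. vmap f v = vmap g v) \<and> (\<forall>e\<in>gedges G. emap f e = emap g e)"

text \<open>Composition g \<circ> f (edge images concatenated, no cancellation).\<close>
definition gcomp :: "('w, 'f, 'x, 'g) gmap \<Rightarrow> ('v, 'e, 'w, 'f) gmap \<Rightarrow> ('v, 'e, 'x, 'g) gmap" where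
  "gcomp g f = \<lparr> vmap = vmap g \<circ> vmap f, emap = (\<lambda>e. concat (map (img g) (emap f e))) \<rparr>"

definition gid :: "('v, 'e, 'v, 'e) gmap" where
  "gid = \<lparr> vmap = id, emap = (\<lambda>e. [(e, True)]) \<rparr>"

primrec gpow :: "('v, 'e, 'v, 'e) gmap \<Rightarrow> nat \<Rightarrow> ('v, 'e, 'v, 'e) gmap" where
  "gpow f 0 = gid"
| "gpow f (Suc n) = gcomp f (gpow f n)"

definition is_giso :: "('v, 'e) mgraph \<Rightarrow> ('w, 'f) mgraph \<Rightarrow> ('v, 'e, 'w, 'f) gmap \<Rightarrow> bool" where
  "is_giso G H h \<longleftrightarrow> is_gmap G H h \<and> bij_betw (vmap h) (gverts G) (gverts H) \<and>
     (\<forall>e\<in>gedges G. length (emap h e) = 1) \<and>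
     bij_betw (\<lambda>d. hd (img h d)) (oedges G) (oedges H)"

definition trans_mat :: "('v, 'e, 'v, 'e) gmap \<Rightarrow> 'e \<Rightarrow> 'e \<Rightarrow> nat" where
  "trans_mat f e e' = length (filter (\<lambda>d. fst d = e') (emap f e))"

primrec mat_pow :: "('v, 'e) mgraph \<Rightarrow> ('e \<Rightarrow> 'e \<Rightarrow> nat) \<Rightarrow> nat \<Rightarrow> 'e \<Rightarrow> 'e \<Rightarrow> nat" where
  "mat_pow G T 0 e e' = (if e = e' then 1 else 0)"
| "mat_pow G T (Suc n) e e' = (\<Sum>e''\<in>gedges G. T e e'' * mat_pow G T n e'' e')"

definition irreducible_matrix :: "('v, 'e) mgraph \<Rightarrow> ('e \<Rightarrow> 'e \<Rightarrow> nat) \<Rightarrow> bool" where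
  "irreducible_matrix G T \<longleftrightarrow> (\<forall>e\<in>gedges G. \<forall>e'\<in>gedges G. \<exists>n>0. mat_pow G T n e e' > 0)"

definition valence :: "('v, 'e) mgraph \<Rightarrow> 'v \<Rightarrow> nat" where
  "valence G v = card {d \<in> oedges G. oinit G d = v}"

definition irreducible_map :: "('v, 'e) mgraph \<Rightarrow> ('v, 'e, 'v, 'e) gmap \<Rightarrow> bool" where
  "irreducible_map G f \<longleftrightarrow> irreducible_matrix G (trans_mat f) \<and> (\<forall>v\<in>gverts G. valence G v \<ge> 3)"

definition expanding :: "('v, 'e) mgraph \<Rightarrow> ('v, 'e, 'v, 'e) gmap \<Rightarrow> bool" where
  "expanding G f \<longleftrightarrow> (\<forall>e\<in>gedges G. filterlim (\<lambda>n. length (emap (gpow f n) e)) at_top sequentially)"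

definition cancel1 :: "'e oedge list \<Rightarrow> 'e oedge list \<Rightarrow> bool" where
  "cancel1 p q \<longleftrightarrow> (\<exists>xs ys d. p = xs @ [d, orev d] @ ys \<and> q = xs @ ys)"

definition path_htpc :: "'e oedge list \<Rightarrow> 'e oedge list \<Rightarrow> bool" where
  "path_htpc = (sup cancel1 (conversep cancel1))\<^sup>*\<^sup>*"

text \<open>Two maps G \<rightarrow> H (edge images possibly trivial paths) are homotopic iff there are vertex
  tracks p v from f v to g v with g(e) homotopic rel endpoints to (p (iota e))^-1 f(e) p (tau e).\<close>
definition ghomotopic :: "('v, 'e) mgraph \<Rightarrow> ('w, 'f) mgraph \<Rightarrow> ('v, 'e, 'w, 'f) gmap \<Rightarrow> ('v, 'e, 'w, 'f) gmap \<Rightarrow> bool" where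
  "ghomotopic G H f g \<longleftrightarrow> (\<exists>p. (\<forall>v\<in>gverts G. is_tpath H (p v) (vmap f v) (vmap g v)) \<and>
     (\<forall>e\<in>gedges G. path_htpc (emap g e) (rev_path (p (gsrc G e)) @ emap f e @ p (gtgt G e))))"

definition is_cmap :: "('v, 'e) mgraph \<Rightarrow> ('w, 'f) mgraph \<Rightarrow> ('v, 'e, 'w, 'f) gmap \<Rightarrow> bool" where
  "is_cmap G H f \<longleftrightarrow> (\<forall>v\<in>gverts G. vmap f v \<in> gverts H) \<and>
     (\<forall>e\<in>gedges G. is_tpath H (emap f e) (vmap f (gsrc G e)) (vmap f (gtgt G e)))"

definition homotopy_equiv :: "('v, 'e) mgraph \<Rightarrow> ('v, 'e, 'v, 'e) gmap \<Rightarrow> bool" where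
  "homotopy_equiv G f \<longleftrightarrow> (\<exists>g. is_cmap G G g \<and>
     ghomotopic G G (gcomp g f) gid \<and> ghomotopic G G (gcomp f g) gid)"

text \<open>Untouched vertices/edges keep their
  names, new vertices/edges get fresh names; the isomorphism h at the end of a fold
  decomposition absorbs all naming choices.\<close>

definition fold_base :: "('v, 'e) mgraph \<Rightarrow> 'e oedge \<Rightarrow> 'e oedge \<Rightarrow> bool" where
  "fold_base G d0 d1 \<longleftrightarrow> d0 \<in> oedges G \<and> d1 \<in> oedges G \<and> fst d0 \<noteq> fst d1 \<and>
     oinit G d0 = oinit G d1"

definition complete_fold :: "('v, 'e) mgraph \<Rightarrow> ('v, 'e, 'v, 'e) gmap \<Rightarrow> ('v, 'e) mgraph \<Rightarrow> bool" where
  "complete_fold G f G' \<longleftrightarrow> (\<exists>d0 d1. fold_base G d0 d1 \<and>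
     (let q = (\<lambda>v. if v = oterm G d1 then oterm G d0 else v) in
       gverts G' = q ` gverts G \<and> gedges G' = gedges G - {fst d1} \<and>
       (\<forall>e\<in>gedges G'. gsrc G' e = q (gsrc G e) \<and> gtgt G' e = q (gtgt G e)) \<and>
       (\<forall>v\<in>gverts G. vmap f v = q v) \<and>
       (\<forall>e\<in>gedges G - {fst d1}. emap f e = [(e, True)]) \<and>
       img f d1 = [d0]))"

definition full_fold :: "('v, 'e) mgraph \<Rightarrow> ('v, 'e, 'v, 'e) gmap \<Rightarrow> ('v, 'e) mgraph \<Rightarrow> bool" where
  "full_fold G f G' \<longleftrightarrow> (\<exists>d0 d1 n. fold_base G d0 d1 \<and> n \<notin> gedges G \<and>
     gverts G' = gverts G \<and> gedges G' = (gedges G - {fst d1}) \<union> {n} \<and>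
     (\<forall>e\<in>gedges G - {fst d1}. gsrc G' e = gsrc G e \<and> gtgt G' e = gtgt G e) \<and>
     gsrc G' n = oterm G d0 \<and> gtgt G' n = oterm G d1 \<and>
     (\<forall>v\<in>gverts G. vmap f v = v) \<and>
     (\<forall>e\<in>gedges G - {fst d1}. emap f e = [(e, True)]) \<and>
     img f d1 = [d0, (n, True)])"

definition partial_fold :: "('v, 'e) mgraph \<Rightarrow> ('v, 'e, 'v, 'e) gmap \<Rightarrow> ('v, 'e) mgraph \<Rightarrow> bool" where
  "partial_fold G f G' \<longleftrightarrow> (\<exists>d0 d1 w a b c. fold_base G d0 d1 \<and> w \<notin> gverts G \<and>
     a \<notin> gedges G \<and> b \<notin> gedges G \<and> c \<notin> gedges G \<and> a \<noteq> b \<and> a \<noteq> c \<and> b \<noteq> c \<and>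
     gverts G' = gverts G \<union> {w} \<and>
     gedges G' = (gedges G - {fst d0, fst d1}) \<union> {a, b, c} \<and>
     (\<forall>e\<in>gedges G - {fst d0, fst d1}. gsrc G' e = gsrc G e \<and> gtgt G' e = gtgt G e) \<and>
     gsrc G' a = oinit G d0 \<and> gtgt G' a = w \<and>
     gsrc G' b = w \<and> gtgt G' b = oterm G d0 \<and>
     gsrc G' c = w \<and> gtgt G' c = oterm G d1 \<and>
     (\<forall>v\<in>gverts G. vmap f v = v) \<and>
     (\<forall>e\<in>gedges G - {fst d0, fst d1}. emap f e = [(e, True)]) \<and>
     img f d0 = [(a, True), (b, True)] \<and> img f d1 = [(a, True), (c, True)])"

definition is_fold :: "('v, 'e) mgraph \<Rightarrow> ('v, 'e, 'v, 'e) gmap \<Rightarrow> ('v, 'e) mgraph \<Rightarrow> bool" where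
  "is_fold G f G' \<longleftrightarrow> wf_graph G' \<and> (full_fold G f G' \<or> complete_fold G f G' \<or> partial_fold G f G')"

text \<open>f_k \<circ> ... \<circ> f_1 (with fs 0 = f_1).\<close>
primrec chain :: "(nat \<Rightarrow> ('v, 'e, 'v, 'e) gmap) \<Rightarrow> nat \<Rightarrow> ('v, 'e, 'v, 'e) gmap" where
  "chain fs 0 = gid"
| "chain fs (Suc k) = gcomp (fs k) (chain fs k)"

definition fold_decomposition :: "('v, 'e) mgraph \<Rightarrow> ('v, 'e, 'v, 'e) gmap \<Rightarrow> nat \<Rightarrow> bool" where
  "fold_decomposition G f m \<longleftrightarrow> (\<exists>Gs fs h. Gs 0 = G \<and>
     (\<forall>i<m. is_fold (Gs i) (fs i) (Gs (Suc i))) \<and>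
     is_giso (Gs m) G h \<and> gmap_eq G f (gcomp h (chain fs m)))"

definition supergraph :: "('v, 'e) mgraph \<Rightarrow> ('v, 'e) mgraph \<Rightarrow> bool" where
  "supergraph \<Gamma> G \<longleftrightarrow> wf_graph G \<and> gverts G = gverts \<Gamma> \<and> gedges \<Gamma> \<subseteq> gedges G \<and>
     (\<forall>e\<in>gedges \<Gamma>. gsrc G e = gsrc \<Gamma> e \<and> gtgt G e = gtgt \<Gamma> e)"

definition stack_gen :: "('v, 'e) mgraph \<Rightarrow> ('v, 'e, 'v, 'e) gmap \<Rightarrow> 'e rel" where
  "stack_gen \<Gamma> \<psi> = {(a, b). a \<in> gedges \<Gamma> \<and> b \<in> gedges \<Gamma> \<and> b = fst (hd (emap \<psi> a))}"

definition stack_classes :: "('v, 'e) mgraph \<Rightarrow> ('v, 'e, 'v, 'e) gmap \<Rightarrow> nat" where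
  "stack_classes \<Gamma> \<psi> = card (gedges \<Gamma> // ((stack_gen \<Gamma> \<psi> \<union> (stack_gen \<Gamma> \<psi>)\<inverse>)\<^sup>*))"

definition stack_score :: "('v, 'e) mgraph \<Rightarrow> nat" where
  "stack_score \<Gamma> = (LEAST k. \<exists>G \<psi>. supergraph \<Gamma> G \<and> is_giso G G \<psi> \<and> stack_classes \<Gamma> \<psi> = k)"

end

theory Submission
  imports Defs "HOL-Combinatorics.Cycles"
begin

(*
  Follow a fold decomposition f = h o f_m o ... o f_1 through the graphs \<Gamma>_1 = \<Gamma>, ...,
  \<Gamma>_(m+1), keeping track of a set T_i of edges of \<Gamma>_i that are images of single edges
  of \<Gamma> under f_(i-1) o ... o f_1 and have their endpoints in the image W_i of the vertices
  of \<Gamma>. Since f is bijective on vertices, all partial composites are injective on the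
  vertices of \<Gamma>, and inspecting full, partial and complete folds shows that
  |E(\<Gamma>_i)| - |T_i| - 2 |V(\<Gamma>_i)| grows by at most one per fold. Hence f maps at least
  |E| - m edges e of \<Gamma> onto single edges \<sigma> e, with \<sigma> injective.

  Because f is expanding, no \<sigma>-orbit stays in the domain D of \<sigma> forever. Take N > 1
  with f^N = id on vertices and stack N copies of \<Gamma>, the j-th one transported by f^j.
  Exchanging each e \<in> D with the copy of \<sigma> e in the top layer and then moving every
  layer up cyclically is an automorphism that acts as \<sigma> on D, so each of its stack
  classes meets E - D and the stack score is at most |E - D| \<le> m.
*)

section \<open>Graph maps sending edges to single edges\<close>

lemma img_True [simp]: "img f (c, True) = emap f c"
  by (simp add: img_def)

lemma img_False [simp]: "img f (c, False) = rev_path (emap f c)"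
  by (simp add: img_def)

lemma rev_path_single [simp]: "rev_path [(c, b)] = [(c, \<not> b)]"
  by (simp add: rev_path_def orev_def)

lemma rev_path_rev_path [simp]: "rev_path (rev_path p) = p"
  by (simp add: rev_path_def orev_def rev_map comp_def)

lemma vmap_gcomp [simp]: "vmap (gcomp g f) = vmap g \<circ> vmap f"
  by (simp add: gcomp_def)

lemma is_path_single: "is_path G [d] u v \<longleftrightarrow> d \<in> oedges G \<and> oinit G d = u \<and> oterm G d = v"
  by (auto simp: is_path_def)

lemma oinit_oterm_cases:
  "oinit G d = gsrc G (fst d) \<and> oterm G d = gtgt G (fst d) \<or>
   oinit G d = gtgt G (fst d) \<and> oterm G d = gsrc G (fst d)"
  by (simp add: oinit_def oterm_def)

lemma is_gmap_single_edge_ends: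
  assumes "is_gmap G H f" and "e \<in> gedges G" and "emap f e = [d]"
  shows "oinit H d = vmap f (gsrc G e)" and "oterm H d = vmap f (gtgt G e)"
  using assms by (auto simp: is_gmap_def is_path_single)

definition maps_to_edge :: "('v, 'e, 'w, 'f) gmap \<Rightarrow> 'e \<Rightarrow> 'f \<Rightarrow> bool" where
  "maps_to_edge g e c \<longleftrightarrow> (\<exists>b. emap g e = [(c, b)])"

lemma maps_to_edge_unique: "maps_to_edge g e c \<Longrightarrow> maps_to_edge g e c' \<Longrightarrow> c = c'"
  by (auto simp: maps_to_edge_def)

lemma maps_to_edge_gcomp:
  assumes "maps_to_edge g e c" and "maps_to_edge h c c'"
  shows "maps_to_edge (gcomp h g) e c'"
proof -
  obtain b where "emap g e = [(c, b)]"
    using assms(1) by (auto simp: maps_to_edge_def)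
  then show ?thesis
    using assms(2) by (cases b) (auto simp: maps_to_edge_def gcomp_def)
qed

lemma maps_to_edge_if_img_single:
  assumes "img g (e, b) = [(c, b')]"
  shows "maps_to_edge g e c"
proof (cases b)
  case False
  then have "emap g e = rev_path [(c, b')]"
    using assms by (metis img_False rev_path_rev_path)
  then show ?thesis
    by (simp add: maps_to_edge_def)
qed (use assms in \<open>simp add: maps_to_edge_def\<close>)

lemma maps_to_edge_gpow:
  assumes "\<forall>k<n. (\<sigma> ^^ k) e \<in> D" and "\<forall>d\<in>D. maps_to_edge f d (\<sigma> d)"
  shows "maps_to_edge (gpow f n) e ((\<sigma> ^^ n) e)"
  using assms(1)
proof (induction n)
  case 0
  then show ?case by (auto simp: maps_to_edge_def gid_def)
next
  case (Suc n)
  have "maps_to_edge (gpow f n) e ((\<sigma> ^^ n) e)"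
    using Suc by simp
  moreover have "maps_to_edge f ((\<sigma> ^^ n) e) (\<sigma> ((\<sigma> ^^ n) e))"
    using Suc.prems assms(2) by simp
  ultimately have "maps_to_edge (gcomp f (gpow f n)) e (\<sigma> ((\<sigma> ^^ n) e))"
    by (rule maps_to_edge_gcomp)
  then show ?case
    by simp
qed

lemma giso_edge_map:
  assumes "is_giso G H h"
  defines "\<iota> \<equiv> \<lambda>c. fst (hd (emap h c))"
  shows "\<forall>c\<in>gedges G. maps_to_edge h c (\<iota> c)" and "inj_on \<iota> (gedges G)"
    and "\<iota> ` gedges G \<subseteq> gedges H" and "card (gedges G) = card (gedges H)"
    and "card (gverts G) = card (gverts H)"
proof -
  have bij: "bij_betw (\<lambda>d. hd (img h d)) (oedges G) (oedges H)"
    using assms(1) by (simp add: is_giso_def)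
  have single: "emap h c = [hd (emap h c)]" if "c \<in> gedges G" for c
    using assms(1) that unfolding is_giso_def
    by (metis One_nat_def length_0_conv length_Suc_conv list.sel(1))
  then show "\<forall>c\<in>gedges G. maps_to_edge h c (\<iota> c)"
    unfolding maps_to_edge_def \<iota>_def by (metis prod.collapse)
  have hd_img: "hd (img h (c, b)) = (\<iota> c, b = snd (hd (emap h c)))" if c: "c \<in> gedges G" for c b
  proof -
    obtain a a' where "emap h c = [(a, a')]"
      using single[OF c] by (metis prod.collapse)
    then show ?thesis
      by (cases b) (auto simp: \<iota>_def)
  qed
  show "inj_on \<iota> (gedges G)"
  proof (rule inj_onI)
    fix c1 c2 assume c: "c1 \<in> gedges G" "c2 \<in> gedges G" and "\<iota> c1 = \<iota> c2"
    then obtain b where "hd (img h (c1, True)) = hd (img h (c2, b))"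
      using hd_img[OF c(1), of True] hd_img[OF c(2)] by (metis (full_types))
    then have "(c1, True) = (c2, b)"
      by (rule inj_onD[OF bij_betw_imp_inj_on[OF bij]]) (use c in \<open>simp_all add: oedges_def\<close>)
    then show "c1 = c2" by simp
  qed
  show "\<iota> ` gedges G \<subseteq> gedges H"
  proof
    fix c' assume "c' \<in> \<iota> ` gedges G"
    then obtain c where c: "c \<in> gedges G" "c' = \<iota> c" by blast
    have "hd (img h (c, True)) \<in> oedges H"
      using c(1) by (intro bij_betw_apply[OF bij]) (simp add: oedges_def)
    then show "c' \<in> gedges H"
      using c(2) by (auto simp: \<iota>_def oedges_def mem_Times_iff)
  qed
  show "card (gedges G) = card (gedges H)"
    using bij_betw_same_card[OF bij] by (simp add: oedges_def card_cartesian_product)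
  show "card (gverts G) = card (gverts H)"
    using assms(1) unfolding is_giso_def by (meson bij_betw_same_card)
qed

lemma is_giso_of_edge_permutation:
  assumes "finite (gedges G)" and "bij_betw p (gverts G) (gverts G)"
    and "\<pi> ` gedges G \<subseteq> gedges G" and "inj_on \<pi> (gedges G)"
    and "\<forall>x\<in>gedges G. oinit G (\<pi> x, b x) = p (gsrc G x) \<and> oterm G (\<pi> x, b x) = p (gtgt G x)"
  shows "is_giso G G \<lparr>vmap = p, emap = \<lambda>x. [(\<pi> x, b x)]\<rparr>"
proof -
  let ?\<psi> = "\<lparr>vmap = p, emap = \<lambda>x. [(\<pi> x, b x)]\<rparr>"
  have hd_img: "hd (img ?\<psi> d) = (\<pi> (fst d), snd d = b (fst d))" for d
    by (cases d; cases "snd d") auto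
  have "is_gmap G G ?\<psi>"
    unfolding is_gmap_def
  proof (intro conjI ballI)
    fix v assume "v \<in> gverts G"
    then show "vmap ?\<psi> v \<in> gverts G"
      using bij_betw_apply[OF assms(2)] by simp
  next
    fix x assume "x \<in> gedges G"
    then show "is_path G (emap ?\<psi> x) (vmap ?\<psi> (gsrc G x)) (vmap ?\<psi> (gtgt G x))"
      using assms(3,5) by (auto simp: is_path_single oedges_def)
  qed
  moreover have inj: "inj_on (\<lambda>d. hd (img ?\<psi> d)) (oedges G)"
  proof (rule inj_onI)
    fix d d' assume d: "d \<in> oedges G" "d' \<in> oedges G" and "hd (img ?\<psi> d) = hd (img ?\<psi> d')"
    then have "\<pi> (fst d) = \<pi> (fst d')" and orient: "(snd d = b (fst d)) = (snd d' = b (fst d'))"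
      by (simp_all add: hd_img)
    then have "fst d = fst d'"
      using d assms(4) by (auto simp: oedges_def dest: inj_onD)
    then show "d = d'"
      using orient by (simp add: prod_eq_iff) blast
  qed
  moreover have "bij_betw (\<lambda>d. hd (img ?\<psi> d)) (oedges G) (oedges G)"
  proof -
    have "(\<lambda>d. hd (img ?\<psi> d)) ` oedges G \<subseteq> oedges G"
      using assms(3) by (auto simp: hd_img oedges_def)
    moreover have "finite (oedges G)"
      using assms(1) by (simp add: oedges_def)
    ultimately show ?thesis
      using inj endo_inj_surj unfolding bij_betw_def by blast
  qed
  ultimately show ?thesis
    using assms(2) by (simp add: is_giso_def)
qed

lemma card_le_card_Diff_add: "finite B \<Longrightarrow> card A \<le> card (A - B) + card B"
  using diff_card_le_card_Diff[of B A] by linarith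

lemma card_le_card_merge_image:
  assumes "finite V"
  shows "card V \<le> card ((\<lambda>v. if v = x then y else v) ` V) + 1"
proof -
  have "V \<subseteq> insert x ((\<lambda>v. if v = x then y else v) ` V)"
    by (auto simp: image_iff)
  then have "card V \<le> card (insert x ((\<lambda>v. if v = x then y else v) ` V))"
    using assms by (intro card_mono) auto
  also have "\<dots> \<le> card ((\<lambda>v. if v = x then y else v) ` V) + 1"
    by (simp add: card_insert_le_m1 card_insert_if)
  finally show ?thesis .
qed

lemma card_quotient_le_card:
  assumes "equiv UNIV R" and "finite B" and "\<forall>x\<in>A. \<exists>y\<in>B. (x, y) \<in> R"
  shows "card (A // R) \<le> card B"
proof -
  have "A // R \<subseteq> (\<lambda>y. R `` {y}) ` B"
  proof
    fix X assume "X \<in> A // R"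
    then obtain x y where "X = R `` {x}" "y \<in> B" "(x, y) \<in> R"
      using assms(3) unfolding quotient_def by blast
    then show "X \<in> (\<lambda>y. R `` {y}) ` B"
      using equiv_class_eq[OF assms(1)] by blast
  qed
  then have "card (A // R) \<le> card ((\<lambda>y. R `` {y}) ` B)"
    using assms(2) by (intro card_mono) auto
  also have "\<dots> \<le> card B"
    using assms(2) by (rule card_image_le)
  finally show ?thesis .
qed

section \<open>Single-edge images along a fold decomposition\<close>

definition edges_within :: "('v, 'e) mgraph \<Rightarrow> 'v set \<Rightarrow> 'e set \<Rightarrow> bool" where
  "edges_within G W T \<longleftrightarrow> W \<subseteq> gverts G \<and> T \<subseteq> gedges G \<and> (\<forall>c\<in>T. gsrc G c \<in> W \<and> gtgt G c \<in> W)"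

definition tracking_defect :: "('v, 'e) mgraph \<Rightarrow> 'e set \<Rightarrow> int" where
  "tracking_defect G T = int (card (gedges G)) - int (card T) - 2 * int (card (gverts G))"

lemma edges_within_untouched:
  assumes "edges_within G W T" and "vmap fo ` W \<subseteq> gverts G'"
    and "\<And>e. e \<in> gedges G - U \<Longrightarrow> e \<in> gedges G' \<and> emap fo e = [(e, True)] \<and>
           gsrc G' e = vmap fo (gsrc G e) \<and> gtgt G' e = vmap fo (gtgt G e)"
  shows "edges_within G' (vmap fo ` W) (T - U)" and "\<forall>c\<in>T - U. maps_to_edge fo c c"
  using assms unfolding edges_within_def maps_to_edge_def by blast+

lemma fold_base_in_graph:
  assumes "wf_graph G" and "fold_base G d0 d1"
  shows "fst d0 \<in> gedges G" "fst d1 \<in> gedges G" "oinit G d0 \<in> gverts G"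
    "oterm G d0 \<in> gverts G" "oterm G d1 \<in> gverts G"
  using assms unfolding fold_base_def oedges_def wf_graph_def oinit_def oterm_def by auto

lemma full_fold_tracking:
  assumes "wf_graph G" and "full_fold G fo G'" and "edges_within G W T"
  shows "\<exists>T'. edges_within G' (vmap fo ` W) T' \<and> (\<forall>c'\<in>T'. \<exists>c\<in>T. maps_to_edge fo c c') \<and>
           tracking_defect G' T' \<le> tracking_defect G T + 1"
proof -
  obtain d0 d1 n where fb: "fold_base G d0 d1" and n: "n \<notin> gedges G"
    and V': "gverts G' = gverts G" and E': "gedges G' = (gedges G - {fst d1}) \<union> {n}"
    and ends: "\<forall>e\<in>gedges G - {fst d1}. gsrc G' e = gsrc G e \<and> gtgt G' e = gtgt G e"
    and vm: "\<forall>v\<in>gverts G. vmap fo v = v"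
    and em: "\<forall>e\<in>gedges G - {fst d1}. emap fo e = [(e, True)]"
    using assms(2) unfolding full_fold_def by (elim exE conjE) (rule that; assumption)
  have fin: "finite (gedges G)" and ends_G: "\<forall>e\<in>gedges G. gsrc G e \<in> gverts G \<and> gtgt G e \<in> gverts G"
    using assms(1) by (auto simp: wf_graph_def)
  have W: "vmap fo ` W \<subseteq> gverts G'"
    using assms(3) vm V' by (auto simp: edges_within_def)
  have "e \<in> gedges G' \<and> emap fo e = [(e, True)] \<and>
      gsrc G' e = vmap fo (gsrc G e) \<and> gtgt G' e = vmap fo (gtgt G e)"
    if "e \<in> gedges G - {fst d1}" for e
    using that E' ends em vm ends_G by simp
  note untouched = edges_within_untouched[where U = "{fst d1}", OF assms(3) W this]
  have "card (gedges G') = card (gedges G)"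
    using E' n fold_base_in_graph(2)[OF assms(1) fb] fin
    by (simp add: card_insert_if card_Suc_Diff1 del: card_Diff_insert)
  moreover have "card T \<le> card (T - {fst d1}) + 1"
    using card_le_card_Diff_add[of "{fst d1}" T] by simp
  ultimately show ?thesis
    using untouched by (intro exI[of _ "T - {fst d1}"]) (auto simp: tracking_defect_def V')
qed

lemma partial_fold_tracking:
  assumes "wf_graph G" and "partial_fold G fo G'" and "edges_within G W T"
  shows "\<exists>T'. edges_within G' (vmap fo ` W) T' \<and> (\<forall>c'\<in>T'. \<exists>c\<in>T. maps_to_edge fo c c') \<and>
           tracking_defect G' T' \<le> tracking_defect G T + 1"
proof -
  obtain d0 d1 w a b c where fb: "fold_base G d0 d1" and w: "w \<notin> gverts G"
    and abc: "a \<notin> gedges G" "b \<notin> gedges G" "c \<notin> gedges G" "a \<noteq> b" "a \<noteq> c" "b \<noteq> c"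
    and V': "gverts G' = gverts G \<union> {w}"
    and E': "gedges G' = (gedges G - {fst d0, fst d1}) \<union> {a, b, c}"
    and ends: "\<forall>e\<in>gedges G - {fst d0, fst d1}. gsrc G' e = gsrc G e \<and> gtgt G' e = gtgt G e"
    and vm: "\<forall>v\<in>gverts G. vmap fo v = v"
    and em: "\<forall>e\<in>gedges G - {fst d0, fst d1}. emap fo e = [(e, True)]"
    using assms(2) unfolding partial_fold_def by (elim exE conjE) (rule that; assumption)
  let ?U = "{fst d0, fst d1}"
  have fin: "finite (gedges G)" "finite (gverts G)"
    and ends_G: "\<forall>e\<in>gedges G. gsrc G e \<in> gverts G \<and> gtgt G e \<in> gverts G"
    using assms(1) by (auto simp: wf_graph_def)
  have W: "vmap fo ` W \<subseteq> gverts G'"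
    using assms(3) vm V' by (auto simp: edges_within_def)
  have "e \<in> gedges G' \<and> emap fo e = [(e, True)] \<and>
      gsrc G' e = vmap fo (gsrc G e) \<and> gtgt G' e = vmap fo (gtgt G e)"
    if "e \<in> gedges G - ?U" for e
    using that E' ends em vm ends_G by simp
  note untouched = edges_within_untouched[where U = ?U, OF assms(3) W this]
  have U: "?U \<subseteq> gedges G" "card ?U = 2"
    using fold_base_in_graph[OF assms(1) fb] fb by (auto simp: fold_base_def)
  have "card (gedges G') = card (gedges G - ?U) + 3"
    unfolding E' using abc fin by (simp add: card_insert_if)
  moreover have "card (gedges G - ?U) + 2 = card (gedges G)"
    using U fin card_mono[OF fin(1) U(1)] by (simp add: card_Diff_subset)
  moreover have "card (gverts G') = card (gverts G) + 1"
    using V' w fin by simp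
  moreover have "card T \<le> card (T - ?U) + 2"
    using card_le_card_Diff_add[of ?U T] U by simp
  ultimately show ?thesis
    using untouched by (intro exI[of _ "T - ?U"]) (auto simp: tracking_defect_def)
qed

lemma complete_foldE:
  assumes "wf_graph G" and "complete_fold G fo G'"
  obtains d0 d1 where "fold_base G d0 d1" and "gedges G' = gedges G - {fst d1}"
    and "gverts G' = vmap fo ` gverts G"
    and "\<forall>e\<in>gedges G'. gsrc G' e = vmap fo (gsrc G e) \<and> gtgt G' e = vmap fo (gtgt G e)"
    and "\<forall>e\<in>gedges G - {fst d1}. emap fo e = [(e, True)]"
    and "maps_to_edge fo (fst d1) (fst d0)"
    and "vmap fo (oterm G d1) = vmap fo (oterm G d0)"
    and "card (gverts G) \<le> card (gverts G') + 1"
    and "oterm G d1 = oterm G d0 \<Longrightarrow> card (gverts G') = card (gverts G)"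
proof -
  obtain d0 d1 where fb: "fold_base G d0 d1" and
     rest: "let q = (\<lambda>v. if v = oterm G d1 then oterm G d0 else v) in
       gverts G' = q ` gverts G \<and> gedges G' = gedges G - {fst d1} \<and>
       (\<forall>e\<in>gedges G'. gsrc G' e = q (gsrc G e) \<and> gtgt G' e = q (gtgt G e)) \<and>
       (\<forall>v\<in>gverts G. vmap fo v = q v) \<and>
       (\<forall>e\<in>gedges G - {fst d1}. emap fo e = [(e, True)]) \<and>
       img fo d1 = [d0]"
    using assms(2) unfolding complete_fold_def by (elim exE conjE) (rule that; assumption)
  define q where "q = (\<lambda>v. if v = oterm G d1 then oterm G d0 else v)"
  have V': "gverts G' = q ` gverts G" and E': "gedges G' = gedges G - {fst d1}"
    and ends: "\<forall>e\<in>gedges G'. gsrc G' e = q (gsrc G e) \<and> gtgt G' e = q (gtgt G e)"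
    and vm: "\<forall>v\<in>gverts G. vmap fo v = q v"
    and em: "\<forall>e\<in>gedges G - {fst d1}. emap fo e = [(e, True)]"
    and im1: "img fo d1 = [d0]"
    using rest unfolding q_def[symmetric] Let_def by auto
  have ends_G: "\<forall>e\<in>gedges G. gsrc G e \<in> gverts G \<and> gtgt G e \<in> gverts G"
    using assms(1) by (auto simp: wf_graph_def)
  note d = fold_base_in_graph[OF assms(1) fb]
  show thesis
  proof (rule that[OF fb E'])
    show "gverts G' = vmap fo ` gverts G"
      using V' vm by (auto intro: image_cong)
    show "\<forall>e\<in>gedges G'. gsrc G' e = vmap fo (gsrc G e) \<and> gtgt G' e = vmap fo (gtgt G e)"
      using ends vm ends_G E' by auto
    show "maps_to_edge fo (fst d1) (fst d0)"
      using im1 maps_to_edge_if_img_single by (metis prod.collapse)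
    show "vmap fo (oterm G d1) = vmap fo (oterm G d0)"
      using vm d by (simp add: q_def)
    show "card (gverts G) \<le> card (gverts G') + 1"
      unfolding V' q_def using assms(1) by (intro card_le_card_merge_image) (simp add: wf_graph_def)
    show "card (gverts G') = card (gverts G)" if "oterm G d1 = oterm G d0"
      using V' that by (simp add: q_def)
  qed (use em in blast)
qed

lemma complete_fold_tracking:
  assumes "wf_graph G" and "complete_fold G fo G'" and "edges_within G W T"
    and "inj_on (vmap fo) W"
  shows "\<exists>T'. edges_within G' (vmap fo ` W) T' \<and> (\<forall>c'\<in>T'. \<exists>c\<in>T. maps_to_edge fo c c') \<and>
           tracking_defect G' T' \<le> tracking_defect G T + 1"
proof -
  obtain d0 d1 where fb: "fold_base G d0 d1" and E': "gedges G' = gedges G - {fst d1}"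
    and V': "gverts G' = vmap fo ` gverts G"
    and ends: "\<forall>e\<in>gedges G'. gsrc G' e = vmap fo (gsrc G e) \<and> gtgt G' e = vmap fo (gtgt G e)"
    and em: "\<forall>e\<in>gedges G - {fst d1}. emap fo e = [(e, True)]"
    and d1_d0: "maps_to_edge fo (fst d1) (fst d0)"
    and merge: "vmap fo (oterm G d1) = vmap fo (oterm G d0)"
    and cardV: "card (gverts G) \<le> card (gverts G') + 1"
    and cardV_eq: "oterm G d1 = oterm G d0 \<Longrightarrow> card (gverts G') = card (gverts G)"
    using complete_foldE[OF assms(1,2)] by blast
  note d = fold_base_in_graph[OF assms(1) fb]
  have fin: "finite (gedges G)" "finite T"
    using assms(1,3) finite_subset by (auto simp: wf_graph_def edges_within_def)
  have W: "vmap fo ` W \<subseteq> gverts G'"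
    using assms(3) V' by (auto simp: edges_within_def)
  have "e \<in> gedges G' \<and> emap fo e = [(e, True)] \<and>
      gsrc G' e = vmap fo (gsrc G e) \<and> gtgt G' e = vmap fo (gtgt G e)"
    if "e \<in> gedges G - {fst d1}" for e
    using that E' ends em by simp
  note untouched = edges_within_untouched[where U = "{fst d1}", OF assms(3) W this]
  have cardE: "card (gedges G') + 1 = card (gedges G)"
    using E' d(2) fin by (simp add: card_Suc_Diff1 del: card_Diff_insert)
  have d1_ends: "oinit G d1 \<in> W" "oterm G d1 \<in> W" if "fst d1 \<in> T"
    using that assms(3) oinit_oterm_cases[of G d1] by (auto simp: edges_within_def)
  show ?thesis
  proof (cases "fst d1 \<in> T \<and> fst d0 \<notin> T")
    case True
    define T' where "T' = insert (fst d0) (T - {fst d1})"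
    have "vmap fo (oinit G d0) \<in> vmap fo ` W" "vmap fo (oterm G d0) \<in> vmap fo ` W"
      using d1_ends True fb merge by (auto simp: fold_base_def) (metis image_eqI)
    then have "gsrc G' (fst d0) \<in> vmap fo ` W \<and> gtgt G' (fst d0) \<in> vmap fo ` W"
      using ends E' d fb oinit_oterm_cases[of G d0] by (auto simp: fold_base_def)
    then have "edges_within G' (vmap fo ` W) T'"
      using untouched(1) E' d(1) fb by (auto simp: T'_def edges_within_def fold_base_def)
    moreover have "\<forall>c'\<in>T'. \<exists>c\<in>T. maps_to_edge fo c c'"
      using untouched(2) d1_d0 True by (auto simp: T'_def)
    moreover have "card T' = card T"
      using True fin by (simp add: T'_def card_Suc_Diff1 del: card_Diff_insert)
    ultimately show ?thesis
      using cardE cardV by (intro exI[of _ T']) (auto simp: tracking_defect_def)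
  next
    case False
    \<comment> \<open>If both folded edges are tracked, injectivity on W forbids merging their ends.\<close>
    have "card (gverts G) \<le> card (gverts G') + (if fst d1 \<in> T then 0 else 1)"
    proof (cases "fst d1 \<in> T")
      case True
      then have "oterm G d0 \<in> W"
        using False assms(3) oinit_oterm_cases[of G d0] by (auto simp: edges_within_def)
      then have "oterm G d1 = oterm G d0"
        using d1_ends[OF True] merge assms(4) by (auto dest: inj_onD)
      then show ?thesis
        using True cardV_eq by simp
    qed (use cardV in simp)
    moreover have "card T \<le> card (T - {fst d1}) + (if fst d1 \<in> T then 1 else 0)"
      by simp arith
    ultimately show ?thesis
      using untouched cardE
      by (intro exI[of _ "T - {fst d1}"]) (auto simp: tracking_defect_def split: if_splits)
  qed
qed

lemma fold_tracking:
  assumes "wf_graph G" and "is_fold G fo G'" and "edges_within G W T"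
    and "inj_on (vmap fo) W"
  shows "\<exists>T'. edges_within G' (vmap fo ` W) T' \<and> (\<forall>c'\<in>T'. \<exists>c\<in>T. maps_to_edge fo c c') \<and>
           tracking_defect G' T' \<le> tracking_defect G T + 1"
proof -
  consider "full_fold G fo G'" | "complete_fold G fo G'" | "partial_fold G fo G'"
    using assms(2) unfolding is_fold_def by blast
  then show ?thesis
  proof cases
    case 1
    then show ?thesis by (rule full_fold_tracking[OF assms(1) _ assms(3)])
  next
    case 2
    then show ?thesis by (rule complete_fold_tracking[OF assms(1) _ assms(3,4)])
  next
    case 3
    then show ?thesis by (rule partial_fold_tracking[OF assms(1) _ assms(3)])
  qed
qed

lemma vmap_chain_Suc: "vmap (chain fs (Suc k)) = vmap (fs k) \<circ> vmap (chain fs k)"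
  by simp

lemma maps_to_edge_chain_Suc:
  "maps_to_edge (chain fs k) e c \<Longrightarrow> maps_to_edge (fs k) c c' \<Longrightarrow> maps_to_edge (chain fs (Suc k)) e c'"
  by (simp add: maps_to_edge_gcomp)

lemma inj_on_chain_prefix:
  assumes "inj_on (vmap (chain fs k)) A" and "i \<le> k"
  shows "inj_on (vmap (chain fs i)) A"
  using assms
proof (induction k)
  case (Suc k)
  show ?case
  proof (cases "i = Suc k")
    case False
    have "inj_on (vmap (fs k) \<circ> vmap (chain fs k)) A"
      using Suc.prems(1) by (simp only: vmap_chain_Suc)
    then have "inj_on (vmap (chain fs k)) A"
      by (rule inj_on_imageI2)
    then show ?thesis
      using Suc False by simp
  qed (use Suc.prems in simp)
qed simp

lemma fold_chain_tracking:
  fixes \<Gamma> :: "('v, 'e) mgraph"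
  assumes "wf_graph \<Gamma>" and "Gs 0 = \<Gamma>" and folds: "\<forall>i<m. is_fold (Gs i) (fs i) (Gs (Suc i))"
    and inj: "inj_on (vmap (chain fs m)) (gverts \<Gamma>)" and "i \<le> m"
  shows "wf_graph (Gs i) \<and>
    (\<exists>T. edges_within (Gs i) (vmap (chain fs i) ` gverts \<Gamma>) T \<and>
      (\<forall>c\<in>T. \<exists>e\<in>gedges \<Gamma>. maps_to_edge (chain fs i) e c) \<and>
      tracking_defect (Gs i) T \<le> int i + tracking_defect \<Gamma> (gedges \<Gamma>))"
  using \<open>i \<le> m\<close>
proof (induction i)
  case 0
  have "edges_within \<Gamma> (gverts \<Gamma>) (gedges \<Gamma>)"
    using assms(1) by (simp add: edges_within_def wf_graph_def)
  moreover have "maps_to_edge gid e e" for e :: 'e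
    by (auto simp: maps_to_edge_def gid_def)
  ultimately show ?case
    using assms(1,2) by (auto simp: gid_def)
next
  case (Suc i)
  let ?W = "vmap (chain fs i) ` gverts \<Gamma>"
  obtain T where wf: "wf_graph (Gs i)" and T: "edges_within (Gs i) ?W T"
    and from_\<Gamma>: "\<forall>c\<in>T. \<exists>e\<in>gedges \<Gamma>. maps_to_edge (chain fs i) e c"
    and defect: "tracking_defect (Gs i) T \<le> int i + tracking_defect \<Gamma> (gedges \<Gamma>)"
    using Suc by auto
  have fold: "is_fold (Gs i) (fs i) (Gs (Suc i))"
    using folds Suc.prems by simp
  have "inj_on (vmap (fs i) \<circ> vmap (chain fs i)) (gverts \<Gamma>)"
    using inj_on_chain_prefix[OF inj Suc.prems] by (simp only: vmap_chain_Suc)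
  then have "inj_on (vmap (fs i)) ?W"
    by (rule inj_on_imageI)
  then obtain T' where T': "edges_within (Gs (Suc i)) (vmap (fs i) ` ?W) T'"
    and from_T: "\<forall>c'\<in>T'. \<exists>c\<in>T. maps_to_edge (fs i) c c'"
    and defect': "tracking_defect (Gs (Suc i)) T' \<le> tracking_defect (Gs i) T + 1"
    using fold_tracking[OF wf fold T] by blast
  have "\<forall>c'\<in>T'. \<exists>e\<in>gedges \<Gamma>. maps_to_edge (chain fs (Suc i)) e c'"
    using from_T from_\<Gamma> maps_to_edge_chain_Suc by metis
  moreover have "edges_within (Gs (Suc i)) (vmap (chain fs (Suc i)) ` gverts \<Gamma>) T'"
    using T' by (simp add: image_comp)
  moreover have "tracking_defect (Gs (Suc i)) T' \<le> int (Suc i) + tracking_defect \<Gamma> (gedges \<Gamma>)"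
    using defect defect' by simp
  moreover have "wf_graph (Gs (Suc i))"
    using fold by (simp add: is_fold_def)
  ultimately show ?case
    by blast
qed

lemma fold_decomposition_single_edge_images:
  assumes "wf_graph \<Gamma>" and "inj_on (vmap f) (gverts \<Gamma>)" and "fold_decomposition \<Gamma> f m"
  shows "\<exists>T \<subseteq> gedges \<Gamma>. card (gedges \<Gamma>) \<le> card T + m \<and>
           (\<forall>c\<in>T. \<exists>e\<in>gedges \<Gamma>. maps_to_edge f e c)"
proof -
  obtain Gs fs h where G0: "Gs 0 = \<Gamma>" and folds: "\<forall>i<m. is_fold (Gs i) (fs i) (Gs (Suc i))"
    and h: "is_giso (Gs m) \<Gamma> h" and f_eq: "gmap_eq \<Gamma> f (gcomp h (chain fs m))"
    using assms(3) unfolding fold_decomposition_def by blast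
  have "vmap f v = (vmap h \<circ> vmap (chain fs m)) v" if "v \<in> gverts \<Gamma>" for v
    using f_eq that by (simp add: gmap_eq_def)
  then have "inj_on (vmap h \<circ> vmap (chain fs m)) (gverts \<Gamma>)"
    using assms(2) inj_on_cong by blast
  then have "inj_on (vmap (chain fs m)) (gverts \<Gamma>)"
    by (rule inj_on_imageI2)
  then obtain T where T: "edges_within (Gs m) (vmap (chain fs m) ` gverts \<Gamma>) T"
    and from_\<Gamma>: "\<forall>c\<in>T. \<exists>e\<in>gedges \<Gamma>. maps_to_edge (chain fs m) e c"
    and defect: "tracking_defect (Gs m) T \<le> int m + tracking_defect \<Gamma> (gedges \<Gamma>)"
    using fold_chain_tracking[OF assms(1) G0 folds _ order.refl] by blast
  define \<iota> where "\<iota> c = fst (hd (emap h c))" for c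
  note iso = giso_edge_map[OF h, folded \<iota>_def]
  have TE: "T \<subseteq> gedges (Gs m)"
    using T by (simp add: edges_within_def)
  have "\<forall>c\<in>\<iota> ` T. \<exists>e\<in>gedges \<Gamma>. maps_to_edge f e c"
  proof
    fix c' assume "c' \<in> \<iota> ` T"
    then obtain c e where c: "c \<in> T" "c' = \<iota> c"
      and e: "e \<in> gedges \<Gamma>" "maps_to_edge (chain fs m) e c"
      using from_\<Gamma> by blast
    have "maps_to_edge (gcomp h (chain fs m)) e c'"
      using maps_to_edge_gcomp[OF e(2), of h] iso(1) TE c by blast
    then show "\<exists>e\<in>gedges \<Gamma>. maps_to_edge f e c'"
      using e(1) f_eq by (auto simp: gmap_eq_def maps_to_edge_def)
  qed
  moreover have "card (\<iota> ` T) = card T"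
    using card_image[OF inj_on_subset[OF iso(2) TE]] .
  moreover have "card (gedges \<Gamma>) \<le> card T + m"
    using defect iso(4,5) by (simp add: tracking_defect_def)
  moreover have "\<iota> ` T \<subseteq> gedges \<Gamma>"
    using iso(3) TE by blast
  ultimately show ?thesis
    by (intro exI[of _ "\<iota> ` T"]) auto
qed

lemma single_edge_preimages:
  assumes "\<forall>c\<in>T. \<exists>e\<in>E. maps_to_edge f e c"
  obtains D \<sigma> where "D \<subseteq> E" and "\<sigma> ` D \<subseteq> T" and "inj_on \<sigma> D" and "card D = card T"
    and "\<forall>e\<in>D. maps_to_edge f e (\<sigma> e)"
proof -
  obtain pre where pre: "\<forall>c\<in>T. pre c \<in> E \<and> maps_to_edge f (pre c) c"
    using bchoice[of T "\<lambda>c e. e \<in> E \<and> maps_to_edge f e c"] assms by blast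
  have inj: "inj_on pre T"
  proof (rule inj_onI)
    fix c c' assume "c \<in> T" "c' \<in> T" "pre c = pre c'"
    then show "c = c'"
      using pre maps_to_edge_unique by metis
  qed
  show thesis
  proof (rule that[of "pre ` T" "inv_into T pre"])
    show "pre ` T \<subseteq> E" "inv_into T pre ` pre ` T \<subseteq> T" "inj_on (inv_into T pre) (pre ` T)"
      using pre by (auto simp: inv_into_into inj_on_inv_into)
    show "card (pre ` T) = card T"
      using inj by (rule card_image)
    show "\<forall>e\<in>pre ` T. maps_to_edge f e (inv_into T pre e)"
      using pre inj by (auto simp: inv_into_f_f)
  qed
qed

section \<open>Stacking copies of the graph\<close>

definition swap_along :: "('a \<Rightarrow> 'a) \<Rightarrow> 'a set \<Rightarrow> 'a \<Rightarrow> 'a" where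
  "swap_along \<tau> D x = (if x \<in> D then \<tau> x else if x \<in> \<tau> ` D then inv_into D \<tau> x else x)"

lemma swap_along_involution:
  assumes "inj_on \<tau> D" and "D \<inter> \<tau> ` D = {}"
  shows "swap_along \<tau> D (swap_along \<tau> D x) = x"
  using assms by (auto simp: swap_along_def inv_into_into f_inv_into_f)

(*
  Edge x of the stack graph is the copy, in layer x div M, of the edge x mod M of \<Gamma>;
  layer j carries \<Gamma> transported by p^j, and layer 0 is \<Gamma> itself. N > 1 keeps the
  bottom layer, which contains D, apart from the top layer N - 1, which contains
  top_copy ` D.
*)
locale stack_construction =
  fixes \<Gamma> :: "('v, nat) mgraph" and p :: "'v \<Rightarrow> 'v" and N M :: nat
    and D :: "nat set" and \<sigma> :: "nat \<Rightarrow> nat" and ob :: "nat \<Rightarrow> bool"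
  assumes wf: "wf_graph \<Gamma>"
    and p_permutes: "p permutes gverts \<Gamma>"
    and period: "p ^^ N = id" and N_gt_1: "1 < N"
    and edges_below: "\<forall>e\<in>gedges \<Gamma>. e < M"
    and D_sub: "D \<subseteq> gedges \<Gamma>" and \<sigma>_into: "\<sigma> ` D \<subseteq> gedges \<Gamma>" and inj_\<sigma>: "inj_on \<sigma> D"
    and \<sigma>_ends: "\<forall>e\<in>D. oinit \<Gamma> (\<sigma> e, ob e) = p (gsrc \<Gamma> e) \<and> oterm \<Gamma> (\<sigma> e, ob e) = p (gtgt \<Gamma> e)"
begin

definition stack_edges :: "nat set" where
  "stack_edges = {x. x div M < N \<and> x mod M \<in> gedges \<Gamma>}"

definition stack_graph :: "('v, nat) mgraph" where
  "stack_graph = \<lparr>gverts = gverts \<Gamma>, gedges = stack_edges,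
     gsrc = \<lambda>x. (p ^^ (x div M)) (gsrc \<Gamma> (x mod M)),
     gtgt = \<lambda>x. (p ^^ (x div M)) (gtgt \<Gamma> (x mod M))\<rparr>"

definition shift :: "nat \<Rightarrow> nat" where
  "shift x = M * (Suc (x div M) mod N) + x mod M"

definition top_copy :: "nat \<Rightarrow> nat" where
  "top_copy e = M * (N - 1) + \<sigma> e"

abbreviation swap :: "nat \<Rightarrow> nat" where
  "swap \<equiv> swap_along top_copy D"

definition swap_orient :: "nat \<Rightarrow> bool" where
  "swap_orient x =
     (if x \<in> D then ob x else if x \<in> top_copy ` D then ob (inv_into D top_copy x) else True)"

definition stack_aut :: "('v, nat, 'v, nat) gmap" where
  "stack_aut = \<lparr>vmap = p, emap = \<lambda>x. [(shift (swap x), swap_orient x)]\<rparr>"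

lemma layer_div_mod [simp]:
  assumes "e \<in> gedges \<Gamma>"
  shows "(M * j + e) div M = j" and "(M * j + e) mod M = e"
  using edges_below assms by auto

lemma base_div_mod [simp]:
  assumes "e \<in> gedges \<Gamma>"
  shows "e div M = 0" and "e mod M = e"
  using layer_div_mod[OF assms, of 0] by simp_all

lemma layer_in_stack_edges: "e \<in> gedges \<Gamma> \<Longrightarrow> j < N \<Longrightarrow> M * j + e \<in> stack_edges"
  by (simp add: stack_edges_def)

lemma funpow_period: "(p ^^ N) v = v"
  by (simp add: period)

lemma funpow_pred_period: "(p ^^ (N - 1)) (p v) = v"
  using N_gt_1 funpow_period by (metis Suc_diff_1 funpow_Suc_right less_trans o_apply zero_less_one)

lemma oinit_oterm_stack_graph:
  assumes "e \<in> gedges \<Gamma>"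
  shows "oinit stack_graph (M * j + e, b) = (p ^^ j) (oinit \<Gamma> (e, b))"
    and "oterm stack_graph (M * j + e, b) = (p ^^ j) (oterm \<Gamma> (e, b))"
  using assms by (simp_all add: stack_graph_def oinit_def oterm_def)

lemma stack_edges_cases:
  assumes "x \<in> stack_edges"
  obtains j e where "x = M * j + e" and "j < N" and "e \<in> gedges \<Gamma>"
  by (rule that[of "x div M" "x mod M"]) (use assms in \<open>simp_all add: stack_edges_def\<close>)

lemma finite_stack_edges: "finite stack_edges"
proof -
  have "stack_edges \<subseteq> (\<lambda>(j, e). M * j + e) ` ({..<N} \<times> gedges \<Gamma>)"
    by (auto elim!: stack_edges_cases)
  then show ?thesis
    using wf by (auto simp: wf_graph_def intro: finite_subset)
qed

lemma wf_stack_graph: "wf_graph stack_graph"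
  using wf finite_stack_edges permutes_in_funpow_image[OF p_permutes]
  by (auto simp: wf_graph_def stack_graph_def stack_edges_def)

lemma supergraph_stack_graph: "supergraph \<Gamma> stack_graph"
  using wf_stack_graph layer_in_stack_edges[of _ 0] N_gt_1
  by (auto simp: supergraph_def stack_graph_def)

lemma shift_layer: "e \<in> gedges \<Gamma> \<Longrightarrow> shift (M * j + e) = M * (Suc j mod N) + e"
  by (simp add: shift_def)

lemma shift_in_stack_edges: "x \<in> stack_edges \<Longrightarrow> shift x \<in> stack_edges"
  using N_gt_1 by (auto elim!: stack_edges_cases simp: shift_layer layer_in_stack_edges)

lemma inj_on_shift: "inj_on shift stack_edges"
proof (rule inj_onI)
  fix x y assume "x \<in> stack_edges" "y \<in> stack_edges" and eq: "shift x = shift y"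
  then obtain j e j' e' where x: "x = M * j + e" "j < N" "e \<in> gedges \<Gamma>"
    and y: "y = M * j' + e'" "j' < N" "e' \<in> gedges \<Gamma>"
    by (auto elim!: stack_edges_cases)
  then have layers: "M * (Suc j mod N) + e = M * (Suc j' mod N) + e'"
    using eq by (simp add: shift_layer)
  have "Suc j mod N = Suc j' mod N"
    using arg_cong[OF layers, of "\<lambda>z. z div M"] x(3) y(3) by simp
  moreover have "e = e'"
    using arg_cong[OF layers, of "\<lambda>z. z mod M"] x(3) y(3) by simp
  ultimately show "x = y"
    using x y by (metis mod_Suc mod_if nat.distinct(1) nat.inject)
qed

lemma oinit_oterm_shift:
  assumes "x \<in> stack_edges"
  shows "oinit stack_graph (shift x, b) = p (oinit stack_graph (x, b))"
    and "oterm stack_graph (shift x, b) = p (oterm stack_graph (x, b))"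
  using assms
  by (auto elim!: stack_edges_cases
      simp: shift_layer oinit_oterm_stack_graph funpow_mod_eq funpow_period)

lemma inj_on_top_copy: "inj_on top_copy D"
  using inj_\<sigma> by (auto simp: top_copy_def inj_on_def)

lemma top_copy_disjoint: "D \<inter> top_copy ` D = {}"
proof -
  have "top_copy e div M = N - 1" if "e \<in> D" for e
    using that \<sigma>_into by (auto simp: top_copy_def)
  moreover have "d div M = 0" if "d \<in> D" for d
    using that D_sub by auto
  ultimately show ?thesis
    using N_gt_1 by force
qed

lemma swap_swap: "swap (swap x) = x"
  using swap_along_involution[OF inj_on_top_copy top_copy_disjoint] .

lemma swap_in_stack_edges:
  assumes "x \<in> stack_edges"
  shows "swap x \<in> stack_edges"
proof -
  have "top_copy e \<in> stack_edges" if "e \<in> D" for e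
    unfolding top_copy_def using that \<sigma>_into N_gt_1 by (intro layer_in_stack_edges) auto
  moreover have "e \<in> stack_edges" if "e \<in> D" for e
    using that D_sub layer_in_stack_edges[of e 0] N_gt_1 by auto
  moreover have "inv_into D top_copy x \<in> D" if "x \<in> top_copy ` D"
    using that by (rule inv_into_into)
  ultimately show ?thesis
    using assms by (simp add: swap_along_def)
qed

lemma gsrc_gtgt_\<sigma>:
  assumes "e \<in> D"
  shows "gsrc \<Gamma> (\<sigma> e) = p (oinit \<Gamma> (e, ob e))" and "gtgt \<Gamma> (\<sigma> e) = p (oterm \<Gamma> (e, ob e))"
proof -
  have "oinit \<Gamma> (\<sigma> e, ob e) = p (gsrc \<Gamma> e)" and "oterm \<Gamma> (\<sigma> e, ob e) = p (gtgt \<Gamma> e)"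
    using \<sigma>_ends assms by auto
  then show "gsrc \<Gamma> (\<sigma> e) = p (oinit \<Gamma> (e, ob e))" and "gtgt \<Gamma> (\<sigma> e) = p (oterm \<Gamma> (e, ob e))"
    by (cases "ob e"; simp add: oinit_def oterm_def)+
qed

lemma oinit_oterm_swap:
  assumes "x \<in> stack_edges"
  shows "oinit stack_graph (swap x, swap_orient x) = gsrc stack_graph x"
    and "oterm stack_graph (swap x, swap_orient x) = gtgt stack_graph x"
proof -
  consider (base) "x \<in> D" | (top) e where "e \<in> D" "x = top_copy e"
    | (other) "x \<notin> D" "x \<notin> top_copy ` D"
    by blast
  then have "oinit stack_graph (swap x, swap_orient x) = gsrc stack_graph x \<and>
      oterm stack_graph (swap x, swap_orient x) = gtgt stack_graph x"
  proof cases
    case base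
    then have "\<sigma> x \<in> gedges \<Gamma>" "x \<in> gedges \<Gamma>"
      using \<sigma>_into D_sub by auto
    then show ?thesis
      using base \<sigma>_ends
      by (simp add: swap_along_def swap_orient_def top_copy_def oinit_oterm_stack_graph
          funpow_pred_period[unfolded One_nat_def])
        (simp add: stack_graph_def)
  next
    case top
    then have "x \<notin> D" and "\<sigma> e \<in> gedges \<Gamma>" "e \<in> gedges \<Gamma>"
      using top_copy_disjoint \<sigma>_into D_sub by auto
    moreover have "inv_into D top_copy x = e"
      using top inj_on_top_copy by (simp add: inv_into_f_f)
    ultimately show ?thesis
      using top oinit_oterm_stack_graph[of e 0] gsrc_gtgt_\<sigma>[OF top(1)]
      by (auto simp: swap_along_def swap_orient_def top_copy_def stack_graph_def
          funpow_pred_period[unfolded One_nat_def])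
  next
    case other
    then show ?thesis
      by (simp add: swap_along_def swap_orient_def oinit_def oterm_def)
  qed
  then show "oinit stack_graph (swap x, swap_orient x) = gsrc stack_graph x"
    and "oterm stack_graph (swap x, swap_orient x) = gtgt stack_graph x"
    by simp_all
qed

lemma is_giso_stack_aut: "is_giso stack_graph stack_graph stack_aut"
  unfolding stack_aut_def
proof (rule is_giso_of_edge_permutation)
  show "finite (gedges stack_graph)"
    by (simp add: stack_graph_def finite_stack_edges)
  show "bij_betw p (gverts stack_graph) (gverts stack_graph)"
    using p_permutes by (simp add: stack_graph_def permutes_imp_bij)
  show "(\<lambda>x. shift (swap x)) ` gedges stack_graph \<subseteq> gedges stack_graph"
    using swap_in_stack_edges shift_in_stack_edges by (auto simp: stack_graph_def)
  have "inj_on swap stack_edges"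
    by (rule inj_on_inverseI[where g = swap]) (rule swap_swap)
  moreover have "inj_on shift (swap ` stack_edges)"
    using inj_on_shift swap_in_stack_edges by (blast intro: inj_on_subset)
  ultimately have "inj_on (shift \<circ> swap) stack_edges"
    by (rule comp_inj_on)
  then show "inj_on (\<lambda>x. shift (swap x)) (gedges stack_graph)"
    by (simp add: stack_graph_def comp_def)
  show "\<forall>x\<in>gedges stack_graph.
      oinit stack_graph (shift (swap x), swap_orient x) = p (gsrc stack_graph x) \<and>
      oterm stack_graph (shift (swap x), swap_orient x) = p (gtgt stack_graph x)"
  proof
    fix x assume "x \<in> gedges stack_graph"
    then have x: "x \<in> stack_edges"
      by (simp add: stack_graph_def)
    show "oinit stack_graph (shift (swap x), swap_orient x) = p (gsrc stack_graph x) \<and>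
        oterm stack_graph (shift (swap x), swap_orient x) = p (gtgt stack_graph x)"
      using oinit_oterm_shift[OF swap_in_stack_edges[OF x]] oinit_oterm_swap[OF x] by simp
  qed
qed

lemma stack_aut_extends_\<sigma>:
  assumes "e \<in> D"
  shows "fst (hd (emap stack_aut e)) = \<sigma> e"
proof -
  have "shift (top_copy e) = \<sigma> e"
    using assms \<sigma>_into N_gt_1 by (auto simp: top_copy_def shift_layer)
  then show ?thesis
    using assms by (simp add: stack_aut_def swap_along_def)
qed

lemma exists_stack_automorphism:
  "\<exists>G \<psi>. supergraph \<Gamma> G \<and> is_giso G G \<psi> \<and> (\<forall>e\<in>D. fst (hd (emap \<psi> e)) = \<sigma> e)"
  using supergraph_stack_graph is_giso_stack_aut stack_aut_extends_\<sigma> by blast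

end

section \<open>The stack score bound\<close>

lemma expanding_orbit_leaves:
  assumes "expanding \<Gamma> f" and "e \<in> gedges \<Gamma>" and "\<forall>d\<in>D. maps_to_edge f d (\<sigma> d)"
  shows "\<exists>k. (\<sigma> ^^ k) e \<notin> D"
proof (rule ccontr)
  assume "\<nexists>k. (\<sigma> ^^ k) e \<notin> D"
  then have single: "maps_to_edge (gpow f n) e ((\<sigma> ^^ n) e)" for n
    using assms(3) by (intro maps_to_edge_gpow) auto
  have "filterlim (\<lambda>n. length (emap (gpow f n) e)) at_top sequentially"
    using assms(1,2) by (simp add: expanding_def)
  then have "eventually (\<lambda>n. 2 \<le> length (emap (gpow f n) e)) sequentially"
    by (simp add: filterlim_at_top)
  then obtain n where "2 \<le> length (emap (gpow f n) e)"
    by (auto simp: eventually_sequentially)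
  then show False
    using single[of n] by (auto simp: maps_to_edge_def)
qed

lemma rtrancl_reaches_exit:
  assumes "\<forall>e\<in>D. \<sigma> e \<in> E \<and> (e, \<sigma> e) \<in> R\<^sup>*" and "x \<in> E" and "(\<sigma> ^^ k) x \<notin> D"
  shows "\<exists>y\<in>E - D. (x, y) \<in> R\<^sup>*"
  using assms(2,3)
proof (induction k arbitrary: x)
  case (Suc k)
  show ?case
  proof (cases "x \<in> D")
    case True
    have "(\<sigma> ^^ k) (\<sigma> x) \<notin> D"
      using Suc.prems(2) by (simp add: funpow_Suc_right del: funpow.simps)
    then obtain y where "y \<in> E - D" "(\<sigma> x, y) \<in> R\<^sup>*"
      using Suc.IH True assms(1) by blast
    then show ?thesis
      using True assms(1) rtrancl_trans by metis
  qed (use Suc.prems in blast)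
qed auto

lemma stack_classes_le_card_Diff:
  assumes "finite (gedges \<Gamma>)" and "D \<subseteq> gedges \<Gamma>" and "\<sigma> ` D \<subseteq> gedges \<Gamma>"
    and "\<forall>e\<in>D. fst (hd (emap \<psi> e)) = \<sigma> e"
    and escape: "\<forall>e\<in>gedges \<Gamma>. \<exists>k. (\<sigma> ^^ k) e \<notin> D"
  shows "stack_classes \<Gamma> \<psi> \<le> card (gedges \<Gamma> - D)"
proof -
  let ?S = "stack_gen \<Gamma> \<psi> \<union> (stack_gen \<Gamma> \<psi>)\<inverse>"
  have "equiv UNIV (?S\<^sup>*)"
    by (simp add: equiv_def refl_rtrancl sym_rtrancl sym_Un_converse trans_rtrancl)
  moreover have "\<forall>e\<in>D. \<sigma> e \<in> gedges \<Gamma> \<and> (e, \<sigma> e) \<in> ?S\<^sup>*"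
  proof
    fix e assume "e \<in> D"
    then have "(e, \<sigma> e) \<in> stack_gen \<Gamma> \<psi>" and "\<sigma> e \<in> gedges \<Gamma>"
      using assms(2-4) by (auto simp: stack_gen_def)
    then show "\<sigma> e \<in> gedges \<Gamma> \<and> (e, \<sigma> e) \<in> ?S\<^sup>*"
      by blast
  qed
  then have "\<forall>x\<in>gedges \<Gamma>. \<exists>y\<in>gedges \<Gamma> - D. (x, y) \<in> ?S\<^sup>*"
    using escape rtrancl_reaches_exit by metis
  ultimately show ?thesis
    unfolding stack_classes_def using assms(1) by (intro card_quotient_le_card) auto
qed

lemma stack_score_le_card_Diff:
  fixes \<Gamma> :: "('v, nat) mgraph" and f :: "('v, nat, 'v, nat) gmap"
  assumes wf: "wf_graph \<Gamma>" and gm: "is_gmap \<Gamma> \<Gamma> f" and exp: "expanding \<Gamma> f"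
    and bij: "bij_betw (vmap f) (gverts \<Gamma>) (gverts \<Gamma>)"
    and D: "D \<subseteq> gedges \<Gamma>" "\<sigma> ` D \<subseteq> gedges \<Gamma>" "inj_on \<sigma> D"
    and f_on_D: "\<forall>e\<in>D. maps_to_edge f e (\<sigma> e)"
  shows "stack_score \<Gamma> \<le> card (gedges \<Gamma> - D)"
proof -
  define p where "p v = (if v \<in> gverts \<Gamma> then vmap f v else v)" for v
  have "bij_betw p (gverts \<Gamma>) (gverts \<Gamma>)"
    using bij bij_betw_cong[of "gverts \<Gamma>" p "vmap f"] by (simp add: p_def)
  then have perm: "p permutes gverts \<Gamma>"
    by (rule bij_imp_permutes) (simp add: p_def)
  then have "permutation p"
    using wf permutation_permutes by (auto simp: wf_graph_def)
  then obtain N where N: "p ^^ N = id" "1 < N"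
    using permutation_is_nilpotent' by blast
  define M where "M = Suc (Max (insert 0 (gedges \<Gamma>)))"
  have below: "\<forall>e\<in>gedges \<Gamma>. e < M"
    using wf by (simp add: M_def wf_graph_def le_imp_less_Suc)
  define ob where "ob e = snd (hd (emap f e))" for e
  have "oinit \<Gamma> (\<sigma> e, ob e) = p (gsrc \<Gamma> e) \<and> oterm \<Gamma> (\<sigma> e, ob e) = p (gtgt \<Gamma> e)" if e: "e \<in> D" for e
  proof -
    have "e \<in> gedges \<Gamma>" and "emap f e = [(\<sigma> e, ob e)]"
      using D f_on_D e by (auto simp: maps_to_edge_def ob_def)
    then show ?thesis
      using is_gmap_single_edge_ends[OF gm] wf by (auto simp: p_def wf_graph_def)
  qed
  then interpret stack_construction \<Gamma> p N M D \<sigma> ob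
    using wf perm N below D by unfold_locales auto
  obtain G \<psi> where "supergraph \<Gamma> G" "is_giso G G \<psi>" and \<psi>_on_D: "\<forall>e\<in>D. fst (hd (emap \<psi> e)) = \<sigma> e"
    using exists_stack_automorphism by blast
  then have "stack_score \<Gamma> \<le> stack_classes \<Gamma> \<psi>"
    unfolding stack_score_def by (blast intro: Least_le)
  also have "\<dots> \<le> card (gedges \<Gamma> - D)"
    using wf D \<psi>_on_D expanding_orbit_leaves[OF exp _ f_on_D]
    by (intro stack_classes_le_card_Diff) (auto simp: wf_graph_def)
  finally show ?thesis .
qed

theorem theoremB:
  fixes \<Gamma> :: "(nat, nat) mgraph" and f :: "(nat, nat, nat, nat) gmap" and m :: nat
  assumes "wf_graph \<Gamma>"
    and "is_gmap \<Gamma> \<Gamma> f"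
    and "irreducible_map \<Gamma> f"
    and "expanding \<Gamma> f"
    and "homotopy_equiv \<Gamma> f"
    and "bij_betw (vmap f) (gverts \<Gamma>) (gverts \<Gamma>)"
    and "fold_decomposition \<Gamma> f m"
  shows "stack_score \<Gamma> \<le> m"
proof -
  obtain T where "T \<subseteq> gedges \<Gamma>" and count: "card (gedges \<Gamma>) \<le> card T + m"
    and images: "\<forall>c\<in>T. \<exists>e\<in>gedges \<Gamma>. maps_to_edge f e c"
    using fold_decomposition_single_edge_images[OF assms(1) _ assms(7)] assms(6)
    by (auto simp: bij_betw_def)
  obtain D \<sigma> where D: "D \<subseteq> gedges \<Gamma>" "\<sigma> ` D \<subseteq> T" "inj_on \<sigma> D"
    and "card D = card T" and "\<forall>e\<in>D. maps_to_edge f e (\<sigma> e)"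
    using single_edge_preimages[OF images] by blast
  moreover have "\<sigma> ` D \<subseteq> gedges \<Gamma>"
    using D(2) \<open>T \<subseteq> gedges \<Gamma>\<close> by blast
  ultimately have "stack_score \<Gamma> \<le> card (gedges \<Gamma> - D)"
    using stack_score_le_card_Diff[OF assms(1,2,4,6)] by blast
  also have "\<dots> = card (gedges \<Gamma>) - card T"
    using D \<open>card D = card T\<close> assms(1)
    by (simp add: card_Diff_subset wf_graph_def finite_subset)
  finally show ?thesis
    using count by linarith
qed

end
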